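(* Assume: (A1) $f(x,y)$ and each component of $g(x,y)$ are convex in $y$ for each fixed $x$, and $f,g$ are twice continuously differentiable; (A2) $Y\subseteq\mathbb{R}^m$ is a compact convex set with $\{y:\exists x\in X \text{ such that } g(x,y)\le 0\}\subseteq\mathrm{int}(Y)$; (R1) for each $x\in X$ there exists $y$ with $g(x,y)<0$. Let $\epsilon\ge0$. A point $(\overline{x},\overline{y})$ is a (global) minimizer of $\mathsf{BLP}(\epsilon)$ if and only if for some $\lambda\ge0$ the point $(\overline{x},\overline{y},\lambda)$ is feasible for and a (global) minimizer of $\mathsf{DBP}(\epsilon,0)$.
   Context: Let $F:\mathbb{R}^n\times\mathbb{R}^m\to\mathbb{R}$, $f:\mathbb{R}^n\times\mathbb{R}^m\to\mathbb{R}$, $g:\mathbb{R}^n\times\mathbb{R}^m\to\mathbb{R}^p$, $G:\mathbb{R}^n\to\mathbb{R}^q$; vector inequalities componentwise; $X=\{x:G(x)\le0\}$. $\mathsf{BLP}(\epsilon)$ is: minimize $F(x,y)$ over $(x,y)$ subject to $G(x)\le0$, $f(x,y)\le\min_{y'}\{f(x,y'):g(x,y')\le0\}+\epsilon$ and $g(x,y)\le\epsilon$. For $\mu\ge0$, $h_\mu(\lambda,x)=\min_y\{\mu\|y\|^2+f(x,y)+\lambda^{\mathsf T}g(x,y):y\in Y\}$ with $Y$ from (A2); $\mathcal{C}(\epsilon,\mu)=\{(x,y,\lambda): G(x)\le0,\ g(x,y)\le\epsilon,\ \lambda\ge0,\ f(x,y)-h_\mu(\lambda,x)\le\epsilon\}$;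 and $\mathsf{DBP}(\epsilon,\mu)$ is: minimize $F(x,y)$ over $(x,y,\lambda)\in\mathcal{C}(\epsilon,\mu)$. *)

theory Defs
  imports "HOL-Analysis.Analysis"
begin

definition C2 :: "('a::euclidean_space \<Rightarrow> real) \<Rightarrow> bool" where
  "C2 h \<longleftrightarrow> (\<exists>(DF :: 'a \<Rightarrow> ('a \<Rightarrow>\<^sub>L real)) (D2F :: 'a \<Rightarrow> ('a \<Rightarrow>\<^sub>L ('a \<Rightarrow>\<^sub>L real))).
      (\<forall>z. (h has_derivative blinfun_apply (DF z)) (at z)) \<and>
      (\<forall>z. (DF has_derivative blinfun_apply (D2F z)) (at z)) \<and>
      continuous_on UNIV D2F)"

definition Xset :: "(real^'n \<Rightarrow> real^'q) \<Rightarrow> (real^'n) set" where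
  "Xset G = {x. \<forall>j. G x $ j \<le> 0}"

definition lower_val :: "(real^'n \<Rightarrow> real^'m \<Rightarrow> real) \<Rightarrow> (real^'n \<Rightarrow> real^'m \<Rightarrow> real^'p)
    \<Rightarrow> real^'n \<Rightarrow> real" where
  "lower_val f g x = Inf {f x y' | y'. \<forall>i. g x y' $ i \<le> 0}"

definition BLP_feasible ::
  "(real^'n \<Rightarrow> real^'m \<Rightarrow> real) \<Rightarrow> (real^'n \<Rightarrow> real^'m \<Rightarrow> real^'p) \<Rightarrow> (real^'n \<Rightarrow> real^'q)
    \<Rightarrow> real \<Rightarrow> real^'n \<Rightarrow> real^'m \<Rightarrow> bool" where
  "BLP_feasible f g G \<epsilon> x y \<longleftrightarrow>
     (\<forall>j. G x $ j \<le> 0) \<and> f x y \<le> lower_val f g x + \<epsilon> \<and> (\<forall>i. g x y $ i \<le> \<epsilon>)"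

definition BLP_minimizer ::
  "(real^'n \<Rightarrow> real^'m \<Rightarrow> real) \<Rightarrow> (real^'n \<Rightarrow> real^'m \<Rightarrow> real) \<Rightarrow> (real^'n \<Rightarrow> real^'m \<Rightarrow> real^'p)
    \<Rightarrow> (real^'n \<Rightarrow> real^'q) \<Rightarrow> real \<Rightarrow> real^'n \<Rightarrow> real^'m \<Rightarrow> bool" where
  "BLP_minimizer F f g G \<epsilon> x y \<longleftrightarrow>
     BLP_feasible f g G \<epsilon> x y \<and>
     (\<forall>x' y'. BLP_feasible f g G \<epsilon> x' y' \<longrightarrow> F x y \<le> F x' y')"

definition h_mu :: "(real^'n \<Rightarrow> real^'m \<Rightarrow> real) \<Rightarrow> (real^'n \<Rightarrow> real^'m \<Rightarrow> real^'p) \<Rightarrow> (real^'m) set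
    \<Rightarrow> real \<Rightarrow> real^'p \<Rightarrow> real^'n \<Rightarrow> real" where
  "h_mu f g Y \<mu> lam x = Inf ((\<lambda>y. \<mu> * (norm y)\<^sup>2 + f x y + lam \<bullet> g x y) ` Y)"

definition DBP_feasible ::
  "(real^'n \<Rightarrow> real^'m \<Rightarrow> real) \<Rightarrow> (real^'n \<Rightarrow> real^'m \<Rightarrow> real^'p) \<Rightarrow> (real^'n \<Rightarrow> real^'q) \<Rightarrow> (real^'m) set
    \<Rightarrow> real \<Rightarrow> real \<Rightarrow> real^'n \<Rightarrow> real^'m \<Rightarrow> real^'p \<Rightarrow> bool" where
  "DBP_feasible f g G Y \<epsilon> \<mu> x y lam \<longleftrightarrow>
     (\<forall>j. G x $ j \<le> 0) \<and> (\<forall>i. g x y $ i \<le> \<epsilon>) \<and> (\<forall>i. lam $ i \<ge> 0) \<and>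
     f x y - h_mu f g Y \<mu> lam x \<le> \<epsilon>"

definition DBP_minimizer ::
  "(real^'n \<Rightarrow> real^'m \<Rightarrow> real) \<Rightarrow> (real^'n \<Rightarrow> real^'m \<Rightarrow> real) \<Rightarrow> (real^'n \<Rightarrow> real^'m \<Rightarrow> real^'p)
    \<Rightarrow> (real^'n \<Rightarrow> real^'q) \<Rightarrow> (real^'m) set \<Rightarrow> real \<Rightarrow> real
    \<Rightarrow> real^'n \<Rightarrow> real^'m \<Rightarrow> real^'p \<Rightarrow> bool" where
  "DBP_minimizer F f g G Y \<epsilon> \<mu> x y lam \<longleftrightarrow>
     DBP_feasible f g G Y \<epsilon> \<mu> x y lam \<and>
     (\<forall>x' y' lam'. DBP_feasible f g G Y \<epsilon> \<mu> x' y' lam' \<longrightarrow> F x y \<le> F x' y')"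

end

theory Submission
  imports Defs
begin

text \<open>For fixed x in X the lower-level problem is a convex program with a Slater point, so
  there is no duality gap. Separating the convex set of attainable (constraint, objective)
  values from the open orthant below (0, v), v the lower-level value, yields a multiplier
  \<open>\<lambda> \<ge> 0\<close> with \<open>h\<^sub>0(\<lambda>, x) \<ge> v\<close>; conversely every \<open>\<lambda> \<ge> 0\<close> gives
  \<open>h\<^sub>0(\<lambda>, x) \<le> v\<close> because all lower-level feasible points lie in Y. Hence
  \<open>f(x, y) \<le> v + \<epsilon>\<close> holds iff \<open>f(x, y) - h\<^sub>0(\<lambda>, x) \<le> \<epsilon>\<close> for some \<open>\<lambda> \<ge> 0\<close>,
  so BLP(\<epsilon>) and DBP(\<epsilon>, 0) have the same feasible points (x, y) and the same minimizers.\<close>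

lemma convex_strict_lower_orthant:
  "convex {(u :: real^'p, t :: real). (\<forall>i. u $ i < 0) \<and> t < v}"
proof -
  have "{(u :: real^'p, t :: real). (\<forall>i. u $ i < 0) \<and> t < v}
        = (\<Inter>i. {u. axis i 1 \<bullet> u < 0}) \<times> {..<v}"
    by (auto simp: inner_axis')
  then show ?thesis
    by (simp add: convex_Times convex_INT convex_halfspace_lt)
qed

lemma le_of_forall_pos_le_add_mult:
  fixes \<alpha> \<beta> b :: real
  assumes "\<And>s. 0 < s \<Longrightarrow> b \<le> \<alpha> + s * \<beta>"
  shows "b \<le> \<alpha>"
proof (cases "\<beta> \<le> 0")
  case True
  then show ?thesis using assms[of 1] by simp
next
  case False
  show ?thesis
  proof (rule field_le_epsilon)
    fix e :: real assume "0 < e"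
    then show "b \<le> \<alpha> + e" using assms[of "e / \<beta>"] False by simp
  qed
qed

lemma nonneg_of_forall_nonneg_le_add_mult:
  fixes \<alpha> \<beta> b :: real
  assumes "\<And>s. 0 \<le> s \<Longrightarrow> b \<le> \<alpha> + s * \<beta>"
  shows "0 \<le> \<beta>"
proof (rule ccontr)
  assume neg: "\<not> 0 \<le> \<beta>"
  define s where "s = (\<alpha> - b + 1) / - \<beta>"
  have "b \<le> \<alpha>" using assms[of 0] by simp
  then have "0 \<le> s" using neg unfolding s_def by (intro divide_nonneg_pos) auto
  moreover have "s * \<beta> = b - \<alpha> - 1" using neg by (simp add: s_def field_simps)
  ultimately show False using assms[of s] by simp
qed

lemma halfspace_above_lower_orthant:
  fixes p :: "real^'p" and q v b :: real
  assumes above: "\<And>u t. (\<forall>i. u $ i < 0) \<Longrightarrow> t < v \<Longrightarrow> b \<le> p \<bullet> u + q * t"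
  shows "(\<forall>i. p $ i \<le> 0) \<and> q \<le> 0 \<and> b \<le> q * v"
proof (intro conjI allI)
  let ?c = "p \<bullet> (- vec 1) + q * (v - 1)"
  fix i
  have "0 \<le> - p $ i"
  proof (rule nonneg_of_forall_nonneg_le_add_mult[where \<alpha> = ?c and b = b])
    fix s :: real assume "0 \<le> s"
    then have "b \<le> p \<bullet> (- vec 1 - s *\<^sub>R axis i 1) + q * (v - 1)"
      by (intro above) (auto simp: axis_def)
    then show "b \<le> ?c + s * - p $ i"
      by (simp add: inner_diff_right inner_axis)
  qed
  then show "p $ i \<le> 0" by simp
next
  let ?c = "p \<bullet> (- vec 1) + q * (v - 1)"
  have "0 \<le> - q"
  proof (rule nonneg_of_forall_nonneg_le_add_mult[where \<alpha> = ?c and b = b])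
    fix s :: real assume "0 \<le> s"
    then have "b \<le> p \<bullet> (- vec 1) + q * (v - 1 - s)"
      by (intro above) auto
    then show "b \<le> ?c + s * - q"
      by (simp add: algebra_simps)
  qed
  then show "q \<le> 0" by simp
next
  show "b \<le> q * v"
  proof (rule le_of_forall_pos_le_add_mult)
    fix s :: real assume "0 < s"
    then have "b \<le> p \<bullet> (- s *\<^sub>R vec 1) + q * (v - s)"
      by (intro above) auto
    then show "b \<le> q * v + s * (- (p \<bullet> vec 1) - q)"
      by (simp add: algebra_simps)
  qed
qed

lemma inner_pos_of_nonpos_neg:
  fixes p u :: "real^'p"
  assumes "\<forall>i. p $ i \<le> 0" "p \<noteq> 0" "\<forall>i. u $ i < 0"
  shows "0 < p \<bullet> u"
proof -
  obtain j where "p $ j \<noteq> 0" using \<open>p \<noteq> 0\<close> by (metis vec_eq_iff zero_index)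
  then have pos: "0 < p $ j * u $ j"
    using assms(1,3) by (intro mult_neg_neg) (auto simp: order_le_less)
  have nonneg: "\<forall>i. 0 \<le> p $ i * u $ i" using assms by (simp add: mult_nonpos_nonpos less_imp_le)
  have "0 < (\<Sum>i\<in>UNIV. p $ i * u $ i)"
    using nonneg pos by (intro sum_pos2[of UNIV j]) auto
  then show ?thesis by (simp add: inner_vec_def)
qed

lemma convex_constraint_value_set:
  fixes fx :: "'a::real_vector \<Rightarrow> real" and gx :: "'a \<Rightarrow> real^'p"
  assumes "convex Y" "convex_on Y fx" "\<And>i. convex_on Y (\<lambda>y. gx y $ i)"
  shows "convex {(u, t). \<exists>y\<in>Y. (\<forall>i. gx y $ i \<le> u $ i) \<and> fx y \<le> t}"
proof (rule convexI)
  fix z1 z2 :: "(real^'p) \<times> real" and a b :: real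
  assume z1: "z1 \<in> {(u, t). \<exists>y\<in>Y. (\<forall>i. gx y $ i \<le> u $ i) \<and> fx y \<le> t}"
    and z2: "z2 \<in> {(u, t). \<exists>y\<in>Y. (\<forall>i. gx y $ i \<le> u $ i) \<and> fx y \<le> t}"
    and "0 \<le> a" "0 \<le> b" "a + b = 1"
  then have a: "a = 1 - b" and b: "0 \<le> b" "b \<le> 1" by auto
  obtain y1 where y1: "y1 \<in> Y" "\<forall>i. gx y1 $ i \<le> fst z1 $ i" "fx y1 \<le> snd z1" using z1 by auto
  obtain y2 where y2: "y2 \<in> Y" "\<forall>i. gx y2 $ i \<le> fst z2 $ i" "fx y2 \<le> snd z2" using z2 by auto
  let ?y = "(1 - b) *\<^sub>R y1 + b *\<^sub>R y2"
  have "?y \<in> Y" using \<open>convex Y\<close> y1(1) y2(1) b unfolding convex_alt by blast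
  have combine: "h ?y \<le> (1 - b) * c1 + b * c2"
    if "convex_on Y h" "h y1 \<le> c1" "h y2 \<le> c2" for h :: "'a \<Rightarrow> real" and c1 c2
  proof -
    have "h ?y \<le> (1 - b) * h y1 + b * h y2"
      using convex_onD[OF that(1)] y1(1) y2(1) b by blast
    also have "\<dots> \<le> (1 - b) * c1 + b * c2"
      using that(2,3) b by (intro add_mono mult_left_mono) auto
    finally show ?thesis .
  qed
  have "\<forall>i. gx ?y $ i \<le> fst (a *\<^sub>R z1 + b *\<^sub>R z2) $ i"
    using combine[OF assms(3)] y1(2) y2(2) by (simp add: a)
  moreover have "fx ?y \<le> snd (a *\<^sub>R z1 + b *\<^sub>R z2)"
    using combine[OF assms(2) y1(3) y2(3)] by (simp add: a)
  ultimately show "a *\<^sub>R z1 + b *\<^sub>R z2 \<in> {(u, t). \<exists>y\<in>Y. (\<forall>i. gx y $ i \<le> u $ i) \<and> fx y \<le> t}"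
    using \<open>?y \<in> Y\<close> unfolding mem_Collect_eq case_prod_beta by blast
qed

lemma slater_multiplier:
  fixes fx :: "'a::real_vector \<Rightarrow> real" and gx :: "'a \<Rightarrow> real^'p"
  assumes convex: "convex Y" "convex_on Y fx" "\<And>i. convex_on Y (\<lambda>y. gx y $ i)"
    and slater: "y0 \<in> Y" "\<forall>i. gx y0 $ i < 0"
    and lower: "\<And>y. y \<in> Y \<Longrightarrow> \<forall>i. gx y $ i \<le> 0 \<Longrightarrow> v \<le> fx y"
  shows "\<exists>lam. (\<forall>i. 0 \<le> lam $ i) \<and> (\<forall>y\<in>Y. v \<le> fx y + lam \<bullet> gx y)"
proof -
  define A where "A = {(u, t). \<exists>y\<in>Y. (\<forall>i. gx y $ i \<le> u $ i) \<and> fx y \<le> t}"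
  define B where "B = {(u :: real^'p, t :: real). (\<forall>i. u $ i < 0) \<and> t < v}"
  have "A \<inter> B = {}"
    using lower by (fastforce simp: A_def B_def intro: order.trans less_imp_le)
  moreover have "(gx y0, fx y0) \<in> A" "(- vec 1, v - 1) \<in> B"
    using slater(1) by (auto simp: A_def B_def)
  ultimately obtain a b where ab: "a \<noteq> 0" "\<forall>z\<in>A. a \<bullet> z \<le> b" "\<forall>z\<in>B. b \<le> a \<bullet> z"
    using separating_hyperplane_sets[of A B] convex_constraint_value_set[OF convex]
      convex_strict_lower_orthant unfolding A_def B_def by blast
  obtain p q where a: "a = (p, q)" by (cases a)
  have "(\<forall>i. p $ i \<le> 0) \<and> q \<le> 0 \<and> b \<le> q * v"
    using ab(3) by (intro halfspace_above_lower_orthant) (auto simp: a B_def)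
  then have p: "\<forall>i. p $ i \<le> 0" and "q \<le> 0" and qv: "b \<le> q * v" by auto
  have separated: "p \<bullet> gx y + q * fx y \<le> q * v" if "y \<in> Y" for y
    using ab(2) qv that by (fastforce simp: a A_def)
  have "q \<noteq> 0"
  proof
    assume "q = 0"
    then have "0 < p \<bullet> gx y0"
      using ab(1) p slater(2) by (intro inner_pos_of_nonpos_neg) (auto simp: a zero_prod_def)
    then show False using separated[OF slater(1)] \<open>q = 0\<close> by simp
  qed
  with \<open>q \<le> 0\<close> have "q < 0" by simp
  show ?thesis
  proof (intro exI[of _ "(1 / q) *\<^sub>R p"] conjI allI ballI)
    fix i show "0 \<le> ((1 / q) *\<^sub>R p) $ i" using p \<open>q < 0\<close> by (simp add: divide_nonpos_neg)
  next
    fix y assume "y \<in> Y"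
    then have "q * (fx y + (p \<bullet> gx y) / q) \<le> q * v"
      using separated \<open>q < 0\<close> by (simp add: algebra_simps)
    then show "v \<le> fx y + ((1 / q) *\<^sub>R p) \<bullet> gx y"
      using \<open>q < 0\<close> by (simp add: mult_le_cancel_left)
  qed
qed

lemma bdd_below_continuous_image:
  fixes h :: "'a::topological_space \<Rightarrow> real"
  assumes "compact S" "continuous_on S h"
  shows "bdd_below (h ` S)"
  using compact_continuous_image[OF assms(2,1)] by (intro bounded_imp_bdd_below compact_imp_bounded)

lemma h_mu_zero: "h_mu f g Y 0 lam x = Inf ((\<lambda>y. f x y + lam \<bullet> g x y) ` Y)"
  by (simp add: h_mu_def)

lemma h_mu_zero_le_lower_val:
  assumes compact: "compact Y"
    and cont: "continuous_on Y (f x)" "\<And>i. continuous_on Y (\<lambda>y. g x y $ i)"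
    and feasible_in_Y: "{y. \<forall>i. g x y $ i \<le> 0} \<subseteq> Y"
    and feasible: "\<exists>y. \<forall>i. g x y $ i \<le> 0"
    and lam: "\<forall>i. 0 \<le> lam $ i"
  shows "h_mu f g Y 0 lam x \<le> lower_val f g x"
proof -
  have bdd: "bdd_below ((\<lambda>y. f x y + lam \<bullet> g x y) ` Y)"
    unfolding inner_vec_def inner_real_def
    by (intro bdd_below_continuous_image compact continuous_intros cont)
  have "h_mu f g Y 0 lam x \<le> f x y" if y: "\<forall>i. g x y $ i \<le> 0" for y
  proof -
    have "h_mu f g Y 0 lam x \<le> f x y + lam \<bullet> g x y"
      unfolding h_mu_zero using bdd feasible_in_Y y by (intro cInf_lower) auto
    also have "lam \<bullet> g x y \<le> 0"
      unfolding inner_vec_def inner_real_def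
      using lam y by (intro sum_nonpos) (simp add: mult_nonneg_nonpos)
    finally show ?thesis by simp
  qed
  then show ?thesis
    unfolding lower_val_def using feasible by (intro cInf_greatest) auto
qed

lemma lower_val_le_h_mu_zero:
  assumes compact: "compact Y" and cont: "continuous_on Y (f x)"
    and convex: "convex Y" "convex_on Y (f x)" "\<And>i. convex_on Y (\<lambda>y. g x y $ i)"
    and feasible_in_Y: "{y. \<forall>i. g x y $ i \<le> 0} \<subseteq> Y"
    and slater: "\<forall>i. g x y0 $ i < 0"
  shows "\<exists>lam. (\<forall>i. 0 \<le> lam $ i) \<and> lower_val f g x \<le> h_mu f g Y 0 lam x"
proof -
  have "y0 \<in> Y" using slater feasible_in_Y by (auto intro: less_imp_le)
  have "{f x y | y. \<forall>i. g x y $ i \<le> 0} \<subseteq> f x ` Y" using feasible_in_Y by blast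
  then have bdd: "bdd_below {f x y | y. \<forall>i. g x y $ i \<le> 0}"
    by (rule bdd_below_mono[OF bdd_below_continuous_image[OF compact cont]])
  have "lower_val f g x \<le> f x y" if "\<forall>i. g x y $ i \<le> 0" for y
    unfolding lower_val_def using bdd that by (intro cInf_lower) auto
  then obtain lam where "\<forall>i. 0 \<le> lam $ i" "\<forall>y\<in>Y. lower_val f g x \<le> f x y + lam \<bullet> g x y"
    using slater_multiplier[OF convex \<open>y0 \<in> Y\<close> slater] by blast
  then show ?thesis
    unfolding h_mu_zero using \<open>y0 \<in> Y\<close> by (intro exI[of _ lam] conjI cInf_greatest) auto
qed

context
  fixes f :: "real^'n \<Rightarrow> real^'m \<Rightarrow> real" and g :: "real^'n \<Rightarrow> real^'m \<Rightarrow> real^'p"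
    and G :: "real^'n \<Rightarrow> real^'q" and Y :: "(real^'m) set"
  assumes weak_duality: "\<And>x lam. x \<in> Xset G \<Longrightarrow> \<forall>i. 0 \<le> lam $ i \<Longrightarrow>
      h_mu f g Y 0 lam x \<le> lower_val f g x"
    and strong_duality: "\<And>x. x \<in> Xset G \<Longrightarrow>
      \<exists>lam. (\<forall>i. 0 \<le> lam $ i) \<and> lower_val f g x \<le> h_mu f g Y 0 lam x"
begin

lemma BLP_feasible_iff_DBP_feasible:
  "BLP_feasible f g G \<epsilon> x y \<longleftrightarrow> (\<exists>lam. DBP_feasible f g G Y \<epsilon> 0 x y lam)"
proof
  assume "BLP_feasible f g G \<epsilon> x y"
  moreover from this have "x \<in> Xset G" by (simp add: BLP_feasible_def Xset_def)
  ultimately show "\<exists>lam. DBP_feasible f g G Y \<epsilon> 0 x y lam"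
    using strong_duality unfolding BLP_feasible_def DBP_feasible_def by force
next
  assume "\<exists>lam. DBP_feasible f g G Y \<epsilon> 0 x y lam"
  then obtain lam where lam: "DBP_feasible f g G Y \<epsilon> 0 x y lam" ..
  then have "x \<in> Xset G" by (simp add: DBP_feasible_def Xset_def)
  with lam show "BLP_feasible f g G \<epsilon> x y"
    using weak_duality[of x lam] unfolding BLP_feasible_def DBP_feasible_def by auto
qed

lemma BLP_minimizer_iff_DBP_minimizer:
  "BLP_minimizer F f g G \<epsilon> x y \<longleftrightarrow>
     (\<exists>lam. (\<forall>i. lam $ i \<ge> 0) \<and> DBP_minimizer F f g G Y \<epsilon> 0 x y lam)"
proof -
  have "\<forall>i. 0 \<le> lam $ i" if "DBP_feasible f g G Y \<epsilon> 0 x y lam" for lam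
    using that by (simp add: DBP_feasible_def)
  then show ?thesis
    unfolding BLP_minimizer_def DBP_minimizer_def BLP_feasible_iff_DBP_feasible by blast
qed

end

theorem proposition4:
  fixes F f :: "real^'n \<Rightarrow> real^'m \<Rightarrow> real"
    and g :: "real^'n \<Rightarrow> real^'m \<Rightarrow> real^'p"
    and G :: "real^'n \<Rightarrow> real^'q"
    and Y :: "(real^'m) set"
    and \<epsilon> :: real
    and xb :: "real^'n" and yb :: "real^'m"
  assumes A1_convf: "\<And>x. convex_on UNIV (f x)"
    and A1_convg: "\<And>x i. convex_on UNIV (\<lambda>y. g x y $ i)"
    and A1_C2f: "C2 (\<lambda>z :: (real^'n) \<times> (real^'m). f (fst z) (snd z))"
    and A1_C2g: "\<And>i. C2 (\<lambda>z :: (real^'n) \<times> (real^'m). g (fst z) (snd z) $ i)"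
    and A2_compact: "compact Y" and A2_convex: "convex Y"
    and A2_interior: "{y. \<exists>x\<in>Xset G. \<forall>i. g x y $ i \<le> 0} \<subseteq> interior Y"
    and R1: "\<And>x. x \<in> Xset G \<Longrightarrow> \<exists>y. \<forall>i. g x y $ i < 0"
    and eps: "\<epsilon> \<ge> 0"
  shows "BLP_minimizer F f g G \<epsilon> xb yb \<longleftrightarrow>
         (\<exists>lam. (\<forall>i. lam $ i \<ge> 0) \<and> DBP_minimizer F f g G Y \<epsilon> 0 xb yb lam)"
proof (rule BLP_minimizer_iff_DBP_minimizer)
  have cont_f: "continuous_on Y (f x)" and cont_g: "continuous_on Y (\<lambda>y. g x y $ i)" for x i
    using convex_on_continuous[OF open_UNIV] A1_convf A1_convg continuous_on_subset by blast+
  have convex_on_Y: "convex_on Y (f x)" "convex_on Y (\<lambda>y. g x y $ i)" for x i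
    using A1_convf A1_convg A2_convex convex_on_subset by blast+
  have feasible_in_Y: "{y. \<forall>i. g x y $ i \<le> 0} \<subseteq> Y" if "x \<in> Xset G" for x
    using A2_interior interior_subset that by blast
  show "h_mu f g Y 0 lam x \<le> lower_val f g x" if "x \<in> Xset G" "\<forall>i. 0 \<le> lam $ i" for x lam
    using h_mu_zero_le_lower_val[where f = f and g = g and x = x, OF A2_compact cont_f cont_g feasible_in_Y[OF that(1)] _ that(2)]
      R1[OF that(1)] by (meson less_imp_le)
  show "\<exists>lam. (\<forall>i. 0 \<le> lam $ i) \<and> lower_val f g x \<le> h_mu f g Y 0 lam x"
    if "x \<in> Xset G" for x
    using lower_val_le_h_mu_zero[where f = f and g = g and x = x, OF A2_compact cont_f A2_convex convex_on_Y feasible_in_Y[OF that]]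
      R1[OF that] by blast
qed

end
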